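(* For each $\mathbf{s} \in \mathcal{S}$, $\bar{\mathbf{p}}^{\epsilon}(\mathbf{s})$ is continuous in $\epsilon > 0$.
   Context: There are $N$ systems $\mathcal{A} = \{1,\ldots,N\}$. $B = [b_{i,j}]$ is a nonnegative $N\times N$ matrix with $b_{i,j} = \beta_{j,i} \ge 0$ (infection rate from system $j$ to system $i$), $\beta_{i,i}=0$; the directed graph with an edge $(i,j)$ iff $\beta_{i,j}>0$ is weakly connected (not necessarily strongly connected). $\boldsymbol{\lambda} \in \mathbb{R}_+^N$ is the vector of external attack rates (some entries may be zero), $\boldsymbol{\delta} > \mathbf{0}$ the recovery rates, and $\mathbf{q}(\mathbf{s}) = (q_i(s_i))_i$ the breach probabilities, where each $q_i:\mathbb{R}_+\to(0,1]$ is decreasing, strictly convex and continuously differentiable; $\mathcal{S} \subset \mathbb{R}_+^N$ is a convex feasible set of security investments. For $\epsilon > 0$, let $\boldsymbol{\lambda}^{\epsilon} := \boldsymbol{\lambda} + \epsilon \mathbf{1}$, and for fixed $\mathbf{s}$ let $\bar{\mathbf{p}}^{\epsilon}(\mathbf{s}) > \mathbf{0}$ denote the unique (strictly positive) solution $\mathbf{p}$ of $(\mathbf{1} - \mathbf{p}) \circ (\boldsymbol{\lambda}^{\epsilon} + B \mathbf{p}) - \mathbf{q}(\mathbf{s})^{-1} \circ \boldsymbol{\delta} \circ \mathbf{p} = \mathbf{0}$, where $\circ$ and $\mathbf{q}(\mathbf{s})^{-1}$ are elementwise product and inverse. *)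

theory Defs
  imports "HOL-Analysis.Analysis"
begin

definition strictly_convex_on :: "real set \<Rightarrow> (real \<Rightarrow> real) \<Rightarrow> bool" where
  "strictly_convex_on A f \<longleftrightarrow>
     (\<forall>x\<in>A. \<forall>y\<in>A. \<forall>t. x \<noteq> y \<and> 0 < t \<and> t < 1 \<longrightarrow>
        f ((1 - t) * x + t * y) < (1 - t) * f x + t * f y)"

text \<open>Infection graph: edge (i,j) iff beta_{i,j} > 0, where B \$ i \$ j = beta_{j,i};
  so edge (i,j) iff B \$ j \$ i > 0. Weak connectivity: the underlying undirected
  graph is connected.\<close>
definition weakly_connected :: "real^'n^'n \<Rightarrow> bool" where
  "weakly_connected B \<longleftrightarrow>
     (\<forall>i j. (i, j) \<in> ({(a, b). B $ b $ a > 0 \<or> B $ a $ b > 0})\<^sup>*)"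

definition equil_eq :: "real^'n^'n \<Rightarrow> real^'n \<Rightarrow> real^'n \<Rightarrow> ('n \<Rightarrow> real \<Rightarrow> real)
    \<Rightarrow> real \<Rightarrow> real^'n \<Rightarrow> real^'n \<Rightarrow> bool" where
  "equil_eq B lam delta q eps s p \<longleftrightarrow>
     (\<forall>i. (1 - p $ i) * (lam $ i + eps + (B *v p) $ i) - delta $ i * p $ i / q i (s $ i) = 0)"

definition pbar :: "real^'n^'n \<Rightarrow> real^'n \<Rightarrow> real^'n \<Rightarrow> ('n \<Rightarrow> real \<Rightarrow> real)
    \<Rightarrow> real \<Rightarrow> real^'n \<Rightarrow> real^'n" where
  "pbar B lam delta q eps s = (THE p. (\<forall>i. p $ i > 0) \<and> equil_eq B lam delta q eps s p)"

end

theory Submission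
  imports Defs
begin

text \<open>Writing \<open>c\<^sub>i = \<delta>\<^sub>i / q\<^sub>i(s\<^sub>i)\<close> and \<open>g = \<lambda> + \<epsilon>\<one> + B p\<close>, the equilibrium equation says
  \<open>p\<^sub>i = g\<^sub>i / (g\<^sub>i + c\<^sub>i)\<close>: \<open>p\<close> is a fixed point of a map \<open>F\<^sub>\<epsilon>\<close> that is monotone and strictly
  subhomogeneous (\<open>F\<^sub>\<epsilon>(t p) > t F\<^sub>\<epsilon>(p)\<close> for \<open>0 < t < 1\<close>) and maps \<open>[0,1]\<^sup>N\<close> into itself,
  so Brouwer gives a fixed point. Comparing positive fixed points \<open>r\<close> of \<open>F\<^sub>\<epsilon>\<close> and \<open>u\<close> of
  \<open>F\<^sub>\<epsilon>\<^sub>'\<close> at an index \<open>k\<close> minimising \<open>r\<^sub>k / u\<^sub>k\<close> shows \<open>r \<ge> min 1 (\<epsilon>/\<epsilon>') u\<close>. For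
  \<open>\<epsilon> = \<epsilon>'\<close> this is uniqueness; in general it gives
  \<open>\<bar>p\<^sup>\<epsilon>\<^sub>i - p\<^sup>\<epsilon>\<^sup>'\<^sub>i\<bar> \<le> \<bar>\<epsilon> - \<epsilon>'\<bar> / min \<epsilon> \<epsilon>'\<close>, hence continuity.\<close>

definition saturation :: "real \<Rightarrow> real \<Rightarrow> real" where
  "saturation c x = x / (x + c)"

lemma saturation_mono: "0 < c \<Longrightarrow> 0 \<le> x \<Longrightarrow> x \<le> y \<Longrightarrow> saturation c x \<le> saturation c y"
  unfolding saturation_def by (simp add: divide_simps algebra_simps mult_right_mono)

lemma saturation_strictly_subhomogeneous:
  "0 < c \<Longrightarrow> 0 < y \<Longrightarrow> 0 < t \<Longrightarrow> t < 1 \<Longrightarrow> t * saturation c y < saturation c (t * y)"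
proof -
  assume c: "0 < c" and y: "0 < y" and t: "0 < t" "t < 1"
  have "t * y + c < y + c"
    using y t by simp
  then have "t * y / (y + c) < t * y / (t * y + c)"
    using c y t by (intro divide_strict_left_mono) (auto intro!: mult_pos_pos add_pos_pos)
  then show ?thesis
    unfolding saturation_def by simp
qed

lemma saturation_pos: "0 < c \<Longrightarrow> 0 < x \<Longrightarrow> 0 < saturation c x"
  unfolding saturation_def by simp

lemma saturation_le_one: "0 < c \<Longrightarrow> 0 \<le> x \<Longrightarrow> saturation c x \<le> 1"
  unfolding saturation_def by simp

lemma saturation_eq_iff: "0 < c \<Longrightarrow> 0 < x \<Longrightarrow> saturation c x = p \<longleftrightarrow> (1 - p) * x = c * p"
  unfolding saturation_def by (auto simp: divide_simps algebra_simps)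

lemma nonneg_matrix_vector_mono:
  fixes A :: "real^'n^'m"
  assumes "\<forall>i j. 0 \<le> A $ i $ j" and "\<forall>j. u $ j \<le> v $ j"
  shows "(A *v u) $ i \<le> (A *v v) $ i"
  unfolding matrix_vector_mult_def using assms by (auto intro!: sum_mono mult_left_mono)

lemma nonneg_matrix_vector_nonneg:
  fixes A :: "real^'n^'m"
  assumes "\<forall>i j. 0 \<le> A $ i $ j" and "\<forall>j. 0 \<le> v $ j"
  shows "0 \<le> (A *v v) $ i"
  using nonneg_matrix_vector_mono[OF assms(1), of 0 v i] assms(2) by simp

definition equil_map :: "real^'n^'n \<Rightarrow> real^'n \<Rightarrow> ('n \<Rightarrow> real) \<Rightarrow> real \<Rightarrow> real^'n \<Rightarrow> real^'n"
  where "equil_map B a c e p = (\<chi> i. saturation (c i) (a $ i + e + (B *v p) $ i))"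

lemma equil_map_fixed_point_eq:
  "equil_map B a c e p = p \<Longrightarrow> p $ i = saturation (c i) (a $ i + e + (B *v p) $ i)"
proof -
  assume "equil_map B a c e p = p"
  then have "equil_map B a c e p $ i = p $ i"
    by simp
  then show ?thesis
    by (simp add: equil_map_def)
qed

context
  fixes B :: "real^'n^'n" and a :: "real^'n" and c :: "'n \<Rightarrow> real"
  assumes B_nonneg: "\<forall>i j. 0 \<le> B $ i $ j"
    and a_nonneg: "\<forall>i. 0 \<le> a $ i"
    and c_pos: "\<forall>i. 0 < c i"
begin

lemma equil_map_argument_pos:
  assumes "0 < e" and "\<forall>j. 0 \<le> p $ j"
  shows "0 < a $ i + e + (B *v p) $ i"
  using nonneg_matrix_vector_nonneg[OF B_nonneg assms(2), of i] a_nonneg[rule_format, of i] assms(1)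
  by linarith

lemma equil_map_in_unit_interval:
  assumes "0 < e" and "\<forall>j. 0 \<le> p $ j"
  shows "0 < equil_map B a c e p $ i" and "equil_map B a c e p $ i \<le> 1"
  using equil_map_argument_pos[OF assms] c_pos
  by (simp_all add: equil_map_def saturation_pos saturation_le_one less_imp_le)

lemma equil_map_has_fixed_point:
  assumes "0 < e"
  obtains p where "p \<in> cbox 0 1" and "equil_map B a c e p = p"
proof (rule brouwer[OF compact_cbox convex_box(1)])
  have "(0::real^'n) \<in> cbox 0 1"
    by (simp add: mem_box_cart)
  then show "cbox (0::real^'n) 1 \<noteq> {}"
    by blast
  have "a $ i + e + (B *v p) $ i + c i \<noteq> 0" if "p \<in> cbox 0 1" for p i
  proof -
    have "\<forall>j. 0 \<le> p $ j"
      using that by (simp add: mem_box_cart)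
    from equil_map_argument_pos[OF assms this, of i] show ?thesis
      using c_pos[rule_format, of i] by linarith
  qed
  then show "continuous_on (cbox 0 1) (equil_map B a c e)"
    unfolding equil_map_def saturation_def
    by (intro continuous_intros) auto
  show "equil_map B a c e \<in> cbox 0 1 \<rightarrow> cbox 0 1"
    using equil_map_in_unit_interval[OF assms]
    by (auto simp: mem_box_cart less_imp_le)
qed

lemma equil_map_fixed_point_ratio_bound:
  assumes e1: "0 < e1" and e2: "0 < e2"
    and r_pos: "\<forall>j. 0 < r $ j" and u_pos: "\<forall>j. 0 < u $ j"
    and r_fix: "equil_map B a c e1 r = r" and u_fix: "equil_map B a c e2 u = u"
  shows "min 1 (e1 / e2) * u $ i \<le> r $ i"
proof -
  obtain k where k_min: "\<And>j. r $ k / u $ k \<le> r $ j / u $ j"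
    using ex_is_arg_min_if_finite[of UNIV "\<lambda>j. r $ j / u $ j"] by (auto simp: is_arg_min_linorder)
  define \<tau> where "\<tau> = r $ k / u $ k"
  have r_ge: "\<tau> * u $ j \<le> r $ j" for j
    using k_min[of j] u_pos by (simp add: \<tau>_def pos_le_divide_eq)
  have \<tau>_pos: "0 < \<tau>" using r_pos u_pos by (simp add: \<tau>_def)
  have \<tau>_ge: "min 1 (e1 / e2) \<le> \<tau>"
  proof (rule ccontr)
    assume "\<not> ?thesis"
    then have \<tau>_lt1: "\<tau> < 1" and \<tau>_e: "\<tau> * e2 < e1"
      using e2 by (simp_all add: not_le pos_less_divide_eq)
    define y where "y = a $ k + e2 + (B *v u) $ k"
    have y_pos: "0 < y"
      unfolding y_def using equil_map_argument_pos[OF e2] u_pos by (simp add: less_imp_le)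
    have "\<tau> * (B *v u) $ k \<le> (B *v r) $ k"
      using nonneg_matrix_vector_mono[OF B_nonneg, of "\<tau> *\<^sub>R u" r k] r_ge
      by (simp add: matrix_vector_mult_scaleR)
    moreover have "\<tau> * a $ k \<le> a $ k"
      using \<tau>_lt1 a_nonneg by (simp add: mult_left_le_one_le \<tau>_pos less_imp_le)
    ultimately have "\<tau> * y \<le> a $ k + e1 + (B *v r) $ k"
      using \<tau>_e unfolding y_def distrib_left by linarith
    then have "saturation (c k) (\<tau> * y) \<le> r $ k"
      using saturation_mono[of "c k" "\<tau> * y"] c_pos \<tau>_pos y_pos
        equil_map_fixed_point_eq[OF r_fix, of k]
      by simp
    moreover have "\<tau> * u $ k < saturation (c k) (\<tau> * y)"
      using saturation_strictly_subhomogeneous[of "c k" y \<tau>] c_pos \<tau>_pos \<tau>_lt1 y_pos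
        equil_map_fixed_point_eq[OF u_fix, of k]
      by (simp add: y_def)
    moreover have "\<tau> * u $ k = r $ k"
      using u_pos[rule_format, of k] by (simp add: \<tau>_def)
    ultimately show False
      by linarith
  qed
  have "min 1 (e1 / e2) * u $ i \<le> \<tau> * u $ i"
    using \<tau>_ge u_pos by (simp add: mult_right_mono less_imp_le)
  then show ?thesis
    using r_ge[of i] by linarith
qed

lemma equil_map_fixed_point_unique:
  assumes "0 < e" and "\<forall>j. 0 < r $ j" and "\<forall>j. 0 < u $ j"
    and "equil_map B a c e r = r" and "equil_map B a c e u = u"
  shows "r = u"
proof -
  have "u $ i \<le> r $ i" and "r $ i \<le> u $ i" for i
    using equil_map_fixed_point_ratio_bound[OF assms(1,1,2,3,4,5), of i]
      equil_map_fixed_point_ratio_bound[OF assms(1,1,3,2,5,4), of i] assms(1)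
    by simp_all
  then show ?thesis
    by (simp add: vec_eq_iff order_antisym)
qed

end

lemma diff_le_of_scaled_le:
  fixes x y a b :: real
  assumes "0 < a" "a \<le> b" "y \<le> 1" "(a / b) * y \<le> x"
  shows "y - x \<le> (b - a) / a"
proof -
  have "y - x \<le> y - (a / b) * y"
    using assms(4) by simp
  also have "\<dots> = (b - a) / b * y"
    using assms by (simp add: divide_simps algebra_simps)
  also have "\<dots> \<le> (b - a) / b"
    using assms by (intro mult_left_le) auto
  also have "\<dots> \<le> (b - a) / a"
    using assms by (simp add: frac_le)
  finally show ?thesis .
qed

lemma abs_diff_le_of_ratio_bounds:
  fixes x y a b :: real
  assumes "0 < a" "0 < b" "x \<le> 1" "y \<le> 1"
    and "min 1 (a / b) * y \<le> x" "min 1 (b / a) * x \<le> y"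
  shows "\<bar>x - y\<bar> \<le> \<bar>a - b\<bar> / min a b"
proof (cases "a \<le> b")
  case True
  then have "min 1 (b / a) = 1" and "min 1 (a / b) = a / b"
    using assms by (auto simp: divide_simps)
  then have "x \<le> y" and "(a / b) * y \<le> x"
    using assms by simp_all
  then show ?thesis
    using diff_le_of_scaled_le[of a b y x] assms True by simp
next
  case False
  then have "min 1 (a / b) = 1" and "min 1 (b / a) = b / a"
    using assms by (auto simp: divide_simps)
  then have "y \<le> x" and "(b / a) * x \<le> y"
    using assms by simp_all
  then show ?thesis
    using diff_le_of_scaled_le[of b a x y] assms False by simp
qed

lemma continuous_on_pos_if_ratio_bounded:
  fixes f :: "real \<Rightarrow> real^'n"
  assumes le_one: "\<And>e i. 0 < e \<Longrightarrow> f e $ i \<le> 1"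
    and ratio: "\<And>e e' i. 0 < e \<Longrightarrow> 0 < e' \<Longrightarrow> min 1 (e / e') * f e' $ i \<le> f e $ i"
  shows "continuous_on {0<..} f"
proof -
  have "((\<lambda>e. f e $ i) \<longlongrightarrow> f e0 $ i) (at e0 within {0<..})" if "0 < e0" for i e0
  proof -
    have "\<forall>\<^sub>F e in at e0 within {0<..}. norm (f e $ i - f e0 $ i) \<le> \<bar>e - e0\<bar> / min e e0"
      unfolding eventually_at_filter
    proof (intro always_eventually allI impI)
      fix e :: real
      assume "e \<in> {0<..}"
      then show "norm (f e $ i - f e0 $ i) \<le> \<bar>e - e0\<bar> / min e e0"
        unfolding real_norm_def
        by (intro abs_diff_le_of_ratio_bounds) (use that le_one ratio in auto)
    qed
    moreover have "((\<lambda>e. \<bar>e - e0\<bar> / min e e0) \<longlongrightarrow> 0) (at e0 within {0<..})"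
      using that by (auto intro!: tendsto_eq_intros)
    ultimately show ?thesis
      by (rule Lim_null_comparison[THEN LIM_zero_cancel])
  qed
  then have "continuous_on {0<..} (\<lambda>e. f e $ i)" for i
    by (simp add: continuous_on_def)
  then have "continuous_on {0<..} (\<lambda>e. \<chi> i. f e $ i)"
    by (rule continuous_on_vec_lambda)
  then show ?thesis by simp
qed

lemma equil_eq_iff_fixed_point:
  fixes B :: "real^'n^'n"
  assumes B_nonneg: "\<forall>i j. 0 \<le> B $ i $ j" and lam_nonneg: "\<forall>i. 0 \<le> lam $ i"
    and c_pos: "\<forall>i. 0 < delta $ i / q i (s $ i)"
    and e: "0 < e" and p_nonneg: "\<forall>i. 0 \<le> p $ i"
  shows "equil_eq B lam delta q e s p \<longleftrightarrow>
    equil_map B lam (\<lambda>i. delta $ i / q i (s $ i)) e p = p"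
proof -
  have "(1 - p $ i) * (lam $ i + e + (B *v p) $ i) - delta $ i * p $ i / q i (s $ i) = 0
    \<longleftrightarrow> saturation (delta $ i / q i (s $ i)) (lam $ i + e + (B *v p) $ i) = p $ i" for i
    using saturation_eq_iff[OF c_pos[rule_format, of i]]
      equil_map_argument_pos[of B lam "\<lambda>i. delta $ i / q i (s $ i)", OF B_nonneg lam_nonneg c_pos e p_nonneg]
    by simp
  then show ?thesis
    unfolding equil_eq_def equil_map_def vec_eq_iff by simp
qed

lemma pbar_positive_fixed_point:
  fixes B :: "real^'n^'n"
  assumes B_nonneg: "\<forall>i j. 0 \<le> B $ i $ j" and lam_nonneg: "\<forall>i. 0 \<le> lam $ i"
    and c_pos: "\<forall>i. 0 < delta $ i / q i (s $ i)" and e: "0 < e"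
  shows pbar_pos: "\<forall>i. 0 < pbar B lam delta q e s $ i"
    and pbar_fixed_point:
      "equil_map B lam (\<lambda>i. delta $ i / q i (s $ i)) e (pbar B lam delta q e s) = pbar B lam delta q e s"
proof -
  let ?c = "\<lambda>i. delta $ i / q i (s $ i)"
  let ?F = "equil_map B lam ?c e"
  let ?positive_solution = "\<lambda>p. (\<forall>i. 0 < p $ i) \<and> equil_eq B lam delta q e s p"
  have solution_iff: "?positive_solution p \<longleftrightarrow> (\<forall>i. 0 < p $ i) \<and> ?F p = p" for p
    using equil_eq_iff_fixed_point[of B lam delta q s, OF B_nonneg lam_nonneg c_pos e, of p]
    by (metis less_imp_le)
  obtain p where "p \<in> cbox 0 1" and p_fixed: "?F p = p"
    using equil_map_has_fixed_point[of B lam ?c, OF B_nonneg lam_nonneg c_pos e] by blast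
  then have "\<forall>i. 0 \<le> p $ i"
    by (simp add: mem_box_cart)
  then have p_pos: "\<forall>i. 0 < p $ i"
    using equil_map_in_unit_interval(1)[of B lam ?c, OF B_nonneg lam_nonneg c_pos e] p_fixed
    by metis
  have "pbar B lam delta q e s = p"
    unfolding pbar_def
  proof (rule the_equality)
    show "?positive_solution p" using solution_iff p_pos p_fixed by blast
    show "r = p" if "?positive_solution r" for r
    proof -
      have "\<forall>i. 0 < r $ i" and "?F r = r"
        using that solution_iff by auto
      then show ?thesis
        by (rule equil_map_fixed_point_unique[of B lam ?c, OF B_nonneg lam_nonneg c_pos e _ p_pos _ p_fixed])
    qed
  qed
  then show "\<forall>i. 0 < pbar B lam delta q e s $ i" and "?F (pbar B lam delta q e s) = pbar B lam delta q e s"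
    using p_pos p_fixed by simp_all
qed

theorem proposition2:
  fixes B :: "real^'n^'n" and lam delta :: "real^'n"
    and q :: "'n \<Rightarrow> real \<Rightarrow> real" and S :: "(real^'n) set" and s :: "real^'n"
  assumes B_nonneg: "\<forall>i j. B $ i $ j \<ge> 0"
    and B_diag: "\<forall>i. B $ i $ i = 0"
    and B_conn: "weakly_connected B"
    and lam_nonneg: "\<forall>i. lam $ i \<ge> 0"
    and delta_pos: "\<forall>i. delta $ i > 0"
    and q_range: "\<forall>i. \<forall>x\<ge>0. 0 < q i x \<and> q i x \<le> 1"
    and q_decr: "\<forall>i. antimono_on {0..} (q i)"
    and q_sconv: "\<forall>i. strictly_convex_on {0..} (q i)"
    and q_C1: "\<forall>i. \<exists>q'. continuous_on {0..} q' \<and>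
                  (\<forall>x\<ge>0. (q i has_real_derivative q' x) (at x within {0..}))"
    and S_convex: "convex S"
    and S_nonneg: "S \<subseteq> {x. \<forall>i. x $ i \<ge> 0}"
    and s_in: "s \<in> S"
  shows "continuous_on {0<..} (\<lambda>eps. pbar B lam delta q eps s)"
proof (rule continuous_on_pos_if_ratio_bounded)
  let ?c = "\<lambda>i. delta $ i / q i (s $ i)"
  have c_pos: "\<forall>i. 0 < ?c i"
    using delta_pos q_range S_nonneg s_in by auto
  note pos = pbar_pos[of B lam delta q s, OF B_nonneg lam_nonneg c_pos]
    and fixed = pbar_fixed_point[of B lam delta q s, OF B_nonneg lam_nonneg c_pos]
  show "pbar B lam delta q e s $ i \<le> 1" if "0 < e" for e i
    using equil_map_in_unit_interval(2)[of B lam ?c, OF B_nonneg lam_nonneg c_pos that]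
      pos[OF that] fixed[OF that]
    by (metis less_imp_le)
  show "min 1 (e / e') * pbar B lam delta q e' s $ i \<le> pbar B lam delta q e s $ i"
    if "0 < e" and "0 < e'" for e e' i
    using equil_map_fixed_point_ratio_bound[of B lam ?c, OF B_nonneg lam_nonneg c_pos that
        pos[OF that(1)] pos[OF that(2)] fixed[OF that(1)] fixed[OF that(2)]] .
qed

end
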